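(* Let $\tilde L$ be a minimum-size counterexample. Let $L'\subseteq\tilde L$ be a subset which, with the order inherited from $\tilde L$, is a lattice (with least element $0_{L'}$ and greatest element $1_{L'}$), and suppose that at least one of the following holds: (i) $3<|L'|<8$; (ii) $2<|L'|<|\tilde L|-2$ and $d\le 1_{L'}$ for some dual atom $d$ of $\tilde L$. Then there exist $x\in L'\setminus\{0_{L'},1_{L'}\}$ and $y\in\tilde L\setminus L'$ such that, in $\tilde L$, $x$ upper covers $y$ or $x$ lower covers $y$.
   Context: For a poset $P$, $x$ upper covers $y$ (and $y$ lower covers $x$) if $y<x$ with nothing strictly between. Join-irreducible: upper covers exactly one element. A dual atom of a finite lattice is an element lower covered by... i.e. an element that the greatest element upper covers. For $x\in P$, ${\uparrow}x=\{y: x\le y\}$. A counterexample is a finite lattice $L$ with $|L|>1$ in which every join-irreducible $j$ satisfies $|{\uparrow}j|>|L|/2$; a minimum-size counterexample is a counterexample $\tilde L$ such that no counterexample has fewer elements. *)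

theory Defs
  imports Main
begin

definition is_poset :: "'a set \<Rightarrow> ('a \<Rightarrow> 'a \<Rightarrow> bool) \<Rightarrow> bool" where
  "is_poset A le \<longleftrightarrow>
     (\<forall>x\<in>A. le x x) \<and>
     (\<forall>x\<in>A. \<forall>y\<in>A. le x y \<and> le y x \<longrightarrow> x = y) \<and>
     (\<forall>x\<in>A. \<forall>y\<in>A. \<forall>z\<in>A. le x y \<and> le y z \<longrightarrow> le x z)"

definition is_lub :: "'a set \<Rightarrow> ('a \<Rightarrow> 'a \<Rightarrow> bool) \<Rightarrow> 'a \<Rightarrow> 'a \<Rightarrow> 'a \<Rightarrow> bool" where
  "is_lub A le x y s \<longleftrightarrow> s \<in> A \<and> le x s \<and> le y s \<and>
     (\<forall>u\<in>A. le x u \<and> le y u \<longrightarrow> le s u)"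

definition is_glb :: "'a set \<Rightarrow> ('a \<Rightarrow> 'a \<Rightarrow> bool) \<Rightarrow> 'a \<Rightarrow> 'a \<Rightarrow> 'a \<Rightarrow> bool" where
  "is_glb A le x y s \<longleftrightarrow> s \<in> A \<and> le s x \<and> le s y \<and>
     (\<forall>u\<in>A. le u x \<and> le u y \<longrightarrow> le u s)"

definition is_lattice :: "'a set \<Rightarrow> ('a \<Rightarrow> 'a \<Rightarrow> bool) \<Rightarrow> bool" where
  "is_lattice A le \<longleftrightarrow> A \<noteq> {} \<and> is_poset A le \<and>
     (\<forall>x\<in>A. \<forall>y\<in>A. (\<exists>s. is_lub A le x y s) \<and> (\<exists>t. is_glb A le x y t))"

definition upper_covers :: "'a set \<Rightarrow> ('a \<Rightarrow> 'a \<Rightarrow> bool) \<Rightarrow> 'a \<Rightarrow> 'a \<Rightarrow> bool" where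
  "upper_covers A le x y \<longleftrightarrow> x \<in> A \<and> y \<in> A \<and> le y x \<and> y \<noteq> x \<and>
     \<not> (\<exists>z\<in>A. le y z \<and> z \<noteq> y \<and> le z x \<and> z \<noteq> x)"

definition join_irreducible :: "'a set \<Rightarrow> ('a \<Rightarrow> 'a \<Rightarrow> bool) \<Rightarrow> 'a \<Rightarrow> bool" where
  "join_irreducible A le j \<longleftrightarrow> j \<in> A \<and> card {y \<in> A. upper_covers A le j y} = 1"

definition up_set :: "'a set \<Rightarrow> ('a \<Rightarrow> 'a \<Rightarrow> bool) \<Rightarrow> 'a \<Rightarrow> 'a set" where
  "up_set A le x = {y \<in> A. le x y}"

definition bottom :: "'a set \<Rightarrow> ('a \<Rightarrow> 'a \<Rightarrow> bool) \<Rightarrow> 'a" where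
  "bottom A le = (THE b. b \<in> A \<and> (\<forall>x\<in>A. le b x))"

definition top_el :: "'a set \<Rightarrow> ('a \<Rightarrow> 'a \<Rightarrow> bool) \<Rightarrow> 'a" where
  "top_el A le = (THE t. t \<in> A \<and> (\<forall>x\<in>A. le x t))"

definition dual_atom :: "'a set \<Rightarrow> ('a \<Rightarrow> 'a \<Rightarrow> bool) \<Rightarrow> 'a \<Rightarrow> bool" where
  "dual_atom A le d \<longleftrightarrow> upper_covers A le (top_el A le) d"

definition counterexample :: "'a set \<Rightarrow> ('a \<Rightarrow> 'a \<Rightarrow> bool) \<Rightarrow> bool" where
  "counterexample A le \<longleftrightarrow> finite A \<and> is_lattice A le \<and> card A > 1 \<and>
     (\<forall>j. join_irreducible A le j \<longrightarrow> 2 * card (up_set A le j) > card A)"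

text \<open>Since every
  finite lattice is isomorphic to one whose carrier is a set of naturals, it suffices
  to quantify over lattices carried by subsets of nat.\<close>
definition min_counterexample :: "'a set \<Rightarrow> ('a \<Rightarrow> 'a \<Rightarrow> bool) \<Rightarrow> bool" where
  "min_counterexample A le \<longleftrightarrow> counterexample A le \<and>
     (\<forall>(B :: nat set) le'. counterexample B le' \<longrightarrow> card A \<le> card B)"

end

theory Submission
  imports Defs
begin

(*
  Suppose the conclusion fails.  Then L' is an isolated block of L: no interior element of L'
  is in a cover relation with an element of L - L'.  Interior elements therefore have the same
  lower covers in L' and in L, so join-irreducibility transfers, and the up-set in L of an
  interior x is its up-set in L' glued at 1_{L'} to the up-set of 1_{L'}.  Deleting the interior
  of L' leaves a smaller lattice; by minimality it has a join-irreducible with a small up-set,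
  and this forces 2|up 1_{L'}| <= |L| - |L'| + 2.  Consequently no interior join-irreducible x
  of L' has 2|up x| <= |L'|.

  In case (i) such an x exists by a direct analysis of lattices with at most seven elements,
  possibly after replacing L' by the principal ideal of the unique lower cover of a
  join-irreducible top, which is again an isolated block.  In case (ii) the dual atom gives
  |up 1_{L'}| <= 2, and minimality applied to L' itself yields an interior join-irreducible
  with 2|up x| <= |L'| + 1, which contradicts the gluing formula as |L'| + 2 < |L|.
*)

section \<open>Finite posets and lattices\<close>

lemma poset_refl: "is_poset A le \<Longrightarrow> x \<in> A \<Longrightarrow> le x x"
  unfolding is_poset_def by blast

lemma poset_antisym: "is_poset A le \<Longrightarrow> x \<in> A \<Longrightarrow> y \<in> A \<Longrightarrow> le x y \<Longrightarrow> le y x \<Longrightarrow> x = y"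
  unfolding is_poset_def by blast

lemma poset_trans:
  "is_poset A le \<Longrightarrow> x \<in> A \<Longrightarrow> y \<in> A \<Longrightarrow> z \<in> A \<Longrightarrow> le x y \<Longrightarrow> le y z \<Longrightarrow> le x z"
  unfolding is_poset_def by meson

lemmas poset_laws = poset_refl poset_antisym poset_trans

lemma lattice_poset: "is_lattice A le \<Longrightarrow> is_poset A le"
  unfolding is_lattice_def by blast

lemma is_poset_subset: "is_poset A le \<Longrightarrow> B \<subseteq> A \<Longrightarrow> is_poset B le"
  unfolding is_poset_def by blast

lemma is_poset_converse: "is_poset A le \<Longrightarrow> is_poset A (\<lambda>x y. le y x)"
  unfolding is_poset_def by blast

lemma is_lattice_converse: "is_lattice A le \<Longrightarrow> is_lattice A (\<lambda>x y. le y x)"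
  unfolding is_lattice_def is_lub_def is_glb_def using is_poset_converse by blast

lemma upper_covers_converse: "upper_covers A (\<lambda>x y. le y x) x y = upper_covers A le y x"
  unfolding upper_covers_def by blast

lemma bottom_eq_top_el_converse: "bottom A le = top_el A (\<lambda>x y. le y x)"
  unfolding bottom_def top_el_def ..

lemma upper_covers_subset:
  "upper_covers A le x y \<Longrightarrow> B \<subseteq> A \<Longrightarrow> x \<in> B \<Longrightarrow> y \<in> B \<Longrightarrow> upper_covers B le x y"
  unfolding upper_covers_def by blast

definition down_set :: "'a set \<Rightarrow> ('a \<Rightarrow> 'a \<Rightarrow> bool) \<Rightarrow> 'a \<Rightarrow> 'a set" where
  "down_set A le x = {y \<in> A. le y x}"

lemma down_set_subset: "down_set K le c \<subseteq> K"
  unfolding down_set_def by blast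

definition lower_covers :: "'a set \<Rightarrow> ('a \<Rightarrow> 'a \<Rightarrow> bool) \<Rightarrow> 'a \<Rightarrow> 'a set" where
  "lower_covers A le x = {y \<in> A. upper_covers A le x y}"

lemma join_irreducible_iff_card_lower_covers:
  "join_irreducible A le j \<longleftrightarrow> j \<in> A \<and> card (lower_covers A le j) = 1"
  unfolding join_irreducible_def lower_covers_def ..

lemma card_down_set_strict_mono:
  assumes po: "is_poset A le" and fin: "finite A"
    and "z \<in> A" "w \<in> A" "le z w" "z \<noteq> w"
  shows "card (down_set A le z) < card (down_set A le w)"
proof (rule psubset_card_mono)
  show "finite (down_set A le w)"
    using fin unfolding down_set_def by simp
  show "down_set A le z \<subset> down_set A le w"
    using poset_laws[OF po] assms unfolding down_set_def by blast
qed

lemma finite_poset_maximal: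
  assumes po: "is_poset A le" and fin: "finite A" and "S \<subseteq> A" "S \<noteq> {}"
  obtains m where "m \<in> S" "\<And>z. z \<in> S \<Longrightarrow> le m z \<Longrightarrow> z = m"
proof -
  let ?f = "\<lambda>z. card (down_set A le z)"
  have finS: "finite (?f ` S)" "?f ` S \<noteq> {}"
    using assms finite_subset by auto
  obtain m where m: "m \<in> S" "?f m = Max (?f ` S)"
    using Max_in[OF finS] by auto
  have "z = m" if "z \<in> S" "le m z" for z
    using card_down_set_strict_mono[OF po fin, of m z] Max_ge[OF finS(1)] m that assms(3)
    by fastforce
  then show thesis using that m(1) by blast
qed

lemma exists_lower_cover_above:
  assumes po: "is_poset A le" and fin: "finite A"
    and "x \<in> A" "y \<in> A" "le y x" "y \<noteq> x"
  shows "\<exists>z\<in>A. upper_covers A le x z \<and> le y z"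
proof -
  let ?S = "{z\<in>A. le y z \<and> le z x \<and> z \<noteq> x}"
  have "y \<in> ?S" using poset_refl[OF po] assms by blast
  then obtain m where m: "m \<in> ?S" "\<And>z. z \<in> ?S \<Longrightarrow> le m z \<Longrightarrow> z = m"
    using finite_poset_maximal[OF po fin, of ?S] by blast
  have "upper_covers A le x m"
    unfolding upper_covers_def using m poset_trans[OF po] assms by blast
  then show ?thesis using m(1) by blast
qed

lemma top_el_eqI:
  assumes "is_poset A le" "t \<in> A" "\<And>x. x \<in> A \<Longrightarrow> le x t"
  shows "top_el A le = t"
  unfolding top_el_def using assms poset_antisym[OF assms(1)] by blast

lemma bottom_eqI:
  assumes "is_poset A le" "b \<in> A" "\<And>x. x \<in> A \<Longrightarrow> le b x"
  shows "bottom A le = b"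
  using top_el_eqI[OF is_poset_converse[OF assms(1)]] assms
  by (simp add: bottom_eq_top_el_converse)

lemma lattice_top:
  assumes fin: "finite A" and lat: "is_lattice A le"
  shows "top_el A le \<in> A" "\<And>x. x \<in> A \<Longrightarrow> le x (top_el A le)"
proof -
  have po: "is_poset A le" using lat by (rule lattice_poset)
  obtain t where t: "t \<in> A" "\<And>z. z \<in> A \<Longrightarrow> le t z \<Longrightarrow> z = t"
    using finite_poset_maximal[OF po fin, of A] lat unfolding is_lattice_def by blast
  have "le x t" if "x \<in> A" for x
  proof -
    obtain s where "is_lub A le x t s" using lat t(1) \<open>x \<in> A\<close> unfolding is_lattice_def by blast
    then show ?thesis using t(2) unfolding is_lub_def by metis
  qed
  then have "top_el A le = t" using top_el_eqI[OF po t(1)] by blast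
  then show "top_el A le \<in> A" "\<And>x. x \<in> A \<Longrightarrow> le x (top_el A le)"
    using t(1) \<open>\<And>x. x \<in> A \<Longrightarrow> le x t\<close> by auto
qed

lemma lattice_bottom:
  assumes "finite A" "is_lattice A le"
  shows "bottom A le \<in> A" "\<And>x. x \<in> A \<Longrightarrow> le (bottom A le) x"
  using lattice_top[OF assms(1) is_lattice_converse[OF assms(2)]]
  by (simp_all add: bottom_eq_top_el_converse)

lemma lattice_bottom_neq_top:
  assumes "finite A" "is_lattice A le" "card A \<ge> 2"
  shows "bottom A le \<noteq> top_el A le"
proof
  assume eq: "bottom A le = top_el A le"
  have "x = top_el A le" if "x \<in> A" for x
    using lattice_bottom[OF assms(1,2)] lattice_top[OF assms(1,2)] eq that
      poset_antisym[OF lattice_poset[OF assms(2)]] by metis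
  then have "A \<subseteq> {top_el A le}" by blast
  then show False using assms(3) card_mono[of "{top_el A le}" A] by simp
qed

lemma sublattice_if_closed:
  assumes lat: "is_lattice A le" and sub: "B \<subseteq> A" and ne: "B \<noteq> {}"
    and join_closed: "\<And>x y s. x \<in> B \<Longrightarrow> y \<in> B \<Longrightarrow> is_lub A le x y s \<Longrightarrow> s \<in> B"
    and meet_closed: "\<And>x y s. x \<in> B \<Longrightarrow> y \<in> B \<Longrightarrow> is_glb A le x y s \<Longrightarrow> s \<in> B"
  shows "is_lattice B le"
proof -
  have "is_poset B le" using is_poset_subset[OF lattice_poset[OF lat] sub] .
  moreover have "(\<exists>s. is_lub B le x y s) \<and> (\<exists>t. is_glb B le x y t)"
    if xy: "x \<in> B" "y \<in> B" for x y
  proof -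
    obtain s t where s: "is_lub A le x y s" and t: "is_glb A le x y t"
      using lat xy sub unfolding is_lattice_def by blast
    have "s \<in> B" "t \<in> B" using join_closed[OF xy s] meet_closed[OF xy t] by auto
    then show ?thesis
      using s t sub unfolding is_lub_def is_glb_def by blast
  qed
  ultimately show ?thesis using ne unfolding is_lattice_def by blast
qed

lemma up_set_lower_cover_of_top:
  assumes po: "is_poset A le" and c: "upper_covers A le t c" and top: "\<And>x. x \<in> A \<Longrightarrow> le x t"
  shows "up_set A le c = {c, t}"
  using c top poset_refl[OF po] unfolding upper_covers_def up_set_def by blast

lemma not_join_irreducible_bottom:
  assumes po: "is_poset A le" and "b \<in> A" "\<And>x. x \<in> A \<Longrightarrow> le b x"
  shows "\<not> join_irreducible A le b"
proof -
  have "lower_covers A le b = {}"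
    using assms poset_antisym[OF po] unfolding lower_covers_def upper_covers_def by blast
  then show ?thesis unfolding join_irreducible_iff_card_lower_covers by simp
qed

section \<open>Transport along bijections\<close>

lemma card_Collect_bij_betw:
  assumes "bij_betw f B K"
  shows "card {k \<in> B. P (f k)} = card {y \<in> K. P y}"
proof -
  have "bij_betw f {k \<in> B. P (f k)} {y \<in> K. P y}"
    using assms unfolding bij_betw_def inj_on_def by auto
  then show ?thesis by (rule bij_betw_same_card)
qed

context
  fixes f :: "'b \<Rightarrow> 'a" and B :: "'b set" and K :: "'a set" and le :: "'a \<Rightarrow> 'a \<Rightarrow> bool"
  assumes bij: "bij_betw f B K"
begin

private lemma image_eq: "K = f ` B"
  using bij by (simp add: bij_betw_imp_surj_on)

private lemma inj_eq: "i \<in> B \<Longrightarrow> j \<in> B \<Longrightarrow> f i = f j \<longleftrightarrow> i = j"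
  using bij unfolding bij_betw_def inj_on_def by blast

lemma is_lattice_pullback:
  assumes lat: "is_lattice K le"
  shows "is_lattice B (\<lambda>i j. le (f i) (f j))"
proof -
  define g where "g = inv_into B f"
  have g: "g y \<in> B" "f (g y) = y" if "y \<in> K" for y
    using that bij unfolding g_def image_eq by (auto simp: inv_into_into f_inv_into_f)
  have fB: "f i \<in> K" if "i \<in> B" for i
    using that unfolding image_eq by blast
  have po: "is_poset K le" using lat by (rule lattice_poset)
  have "is_poset B (\<lambda>i j. le (f i) (f j))"
    unfolding is_poset_def
  proof (intro conjI ballI impI)
    show "le (f i) (f i)" if "i \<in> B" for i
      using poset_refl[OF po fB[OF that]] .
    show "i = j" if "i \<in> B" "j \<in> B" "le (f i) (f j) \<and> le (f j) (f i)" for i j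
      using poset_antisym[OF po fB fB] inj_eq that by blast
    show "le (f i) (f k)" if "i \<in> B" "j \<in> B" "k \<in> B" "le (f i) (f j) \<and> le (f j) (f k)" for i j k
      using poset_trans[OF po fB fB fB] that by blast
  qed
  moreover have "(\<exists>s. is_lub B (\<lambda>i j. le (f i) (f j)) i j s) \<and>
      (\<exists>t. is_glb B (\<lambda>i j. le (f i) (f j)) i j t)"
    if ij: "i \<in> B" "j \<in> B" for i j
  proof -
    obtain s t where s: "is_lub K le (f i) (f j) s" and t: "is_glb K le (f i) (f j) t"
      using lat fB[OF ij(1)] fB[OF ij(2)] unfolding is_lattice_def by blast
    have "is_lub B (\<lambda>i j. le (f i) (f j)) i j (g s)"
      using s g fB unfolding is_lub_def by auto
    moreover have "is_glb B (\<lambda>i j. le (f i) (f j)) i j (g t)"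
      using t g fB unfolding is_glb_def by auto
    ultimately show ?thesis by blast
  qed
  moreover have "B \<noteq> {}"
    using lat unfolding image_eq is_lattice_def by blast
  ultimately show ?thesis unfolding is_lattice_def by blast
qed

lemma upper_covers_pullback:
  "i \<in> B \<Longrightarrow> k \<in> B \<Longrightarrow> upper_covers B (\<lambda>i j. le (f i) (f j)) i k \<longleftrightarrow> upper_covers K le (f i) (f k)"
  unfolding image_eq upper_covers_def using inj_eq by auto

lemma join_irreducible_pullback:
  assumes "i \<in> B"
  shows "join_irreducible B (\<lambda>i j. le (f i) (f j)) i \<longleftrightarrow> join_irreducible K le (f i)"
proof -
  have "{k \<in> B. upper_covers B (\<lambda>i j. le (f i) (f j)) i k} = {k \<in> B. upper_covers K le (f i) (f k)}"
    using upper_covers_pullback assms by blast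
  then show ?thesis
    using card_Collect_bij_betw[OF bij, of "upper_covers K le (f i)"] assms bij_betw_apply[OF bij]
    unfolding join_irreducible_def by simp
qed

lemma card_up_set_pullback:
  "card (up_set B (\<lambda>i j. le (f i) (f j)) i) = card (up_set K le (f i))"
  unfolding up_set_def by (rule card_Collect_bij_betw[OF bij])

lemma counterexample_pullback:
  assumes ce: "counterexample K le"
  shows "counterexample B (\<lambda>i j. le (f i) (f j))"
  unfolding counterexample_def
proof (intro conjI allI impI)
  show "finite B" "1 < card B" "is_lattice B (\<lambda>i j. le (f i) (f j))"
    using ce bij_betw_finite[OF bij] bij_betw_same_card[OF bij] is_lattice_pullback
    unfolding counterexample_def by auto
  fix i assume ji: "join_irreducible B (\<lambda>i j. le (f i) (f j)) i"
  then have "i \<in> B" unfolding join_irreducible_def by blast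
  then show "card B < 2 * card (up_set B (\<lambda>i j. le (f i) (f j)) i)"
    using ce ji join_irreducible_pullback card_up_set_pullback bij_betw_same_card[OF bij]
    unfolding counterexample_def by simp
qed

end

text \<open>Minimality is stated only for lattices carried by subsets of \<open>nat\<close>; every finite lattice is
  transported there along an enumeration of its carrier.\<close>

lemma min_counterexample_smaller_lattice:
  fixes L :: "'b set" and K :: "'a set"
  assumes min: "min_counterexample L leL" and fin: "finite K" and lat: "is_lattice K le"
    and "1 < card K" "card K < card L"
  shows "\<exists>j. join_irreducible K le j \<and> 2 * card (up_set K le j) \<le> card K"
proof (rule ccontr)
  assume "\<not> ?thesis"
  then have "counterexample K le"
    using assms unfolding counterexample_def by (auto simp: not_le)
  moreover obtain f where "bij_betw f {0..<card K} K"
    using ex_bij_betw_nat_finite[OF fin] by blast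
  ultimately have "counterexample {0..<card K} (\<lambda>i j. le (f i) (f j))"
    using counterexample_pullback by blast
  then show False using min assms(5) unfolding min_counterexample_def by fastforce
qed

section \<open>Isolated blocks\<close>

definition isolated_block :: "'a set \<Rightarrow> ('a \<Rightarrow> 'a \<Rightarrow> bool) \<Rightarrow> 'a set \<Rightarrow> 'a \<Rightarrow> 'a \<Rightarrow> bool" where
  "isolated_block L le K a b \<longleftrightarrow>
     K \<subseteq> L \<and> a \<in> K \<and> b \<in> K \<and> a \<noteq> b \<and> (\<forall>y\<in>K. le a y \<and> le y b) \<and>
     (\<forall>x\<in>K - {a, b}. \<forall>y\<in>L - K. \<not> upper_covers L le x y \<and> \<not> upper_covers L le y x)"

lemma isolated_block_converse:
  assumes "isolated_block L le K a b"
  shows "isolated_block L (\<lambda>x y. le y x) K b a"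
proof -
  have "{b, a} = {a, b}" by blast
  then show ?thesis
    using assms unfolding isolated_block_def upper_covers_converse[of L le] by metis
qed

lemma isolated_block_bottom_top:
  assumes "is_poset L le" and bl: "isolated_block L le K a b"
  shows "bottom K le = a" "top_el K le = b"
proof -
  have po: "is_poset K le"
    using is_poset_subset assms unfolding isolated_block_def by blast
  have "a \<in> K" "b \<in> K" "\<And>y. y \<in> K \<Longrightarrow> le a y \<and> le y b"
    using bl unfolding isolated_block_def by auto
  then show "bottom K le = a" "top_el K le = b"
    using bottom_eqI[OF po] top_el_eqI[OF po] by auto
qed

text \<open>Every upper cover of an interior element lies in \<open>K\<close>, so climbing along covers from
  \<open>x\<close> stays in the interior until it reaches \<open>b\<close>.\<close>

lemma isolated_block_up_closure:
  assumes po: "is_poset L le" and fin: "finite L" and bl: "isolated_block L le K a b"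
    and x: "x \<in> K - {a, b}"
  shows "y \<in> L \<Longrightarrow> le x y \<Longrightarrow> y \<in> K - {a, b} \<or> le b y"
proof (induction "card (down_set L le y)" arbitrary: y rule: less_induct)
  case less
  have xL: "x \<in> L" and bL: "b \<in> L" using bl x unfolding isolated_block_def by auto
  show ?case
  proof (cases "y = x")
    case False
    then obtain z where z: "z \<in> L" "upper_covers L le y z" "le x z"
      using exists_lower_cover_above[OF po fin less.prems(1) xL less.prems(2)] by blast
    then have "card (down_set L le z) < card (down_set L le y)"
      using card_down_set_strict_mono[OF po fin z(1) less.prems(1)] unfolding upper_covers_def
      by blast
    then have "z \<in> K - {a, b} \<or> le b z" using less.hyps z by blast
    then show ?thesis
    proof
      assume "le b z"
      then show ?thesis
        using poset_trans[OF po bL z(1) less.prems(1)] z(2) unfolding upper_covers_def by blast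
    next
      assume "z \<in> K - {a, b}"
      then have "y \<in> K" using bl z(2) less.prems(1) unfolding isolated_block_def by blast
      moreover have "y \<noteq> a"
        using poset_antisym[OF po xL] bl x less.prems(2) unfolding isolated_block_def by blast
      ultimately show ?thesis using poset_refl[OF po bL] by blast
    qed
  qed (use x in simp)
qed

lemma isolated_block_down_closure:
  assumes "is_poset L le" "finite L" "isolated_block L le K a b" "x \<in> K - {a, b}"
    and "y \<in> L" "le y x"
  shows "y \<in> K - {a, b} \<or> le y a"
proof -
  have "{b, a} = {a, b}" by blast
  with assms(4) have "x \<in> K - {b, a}" by simp
  with isolated_block_up_closure[OF is_poset_converse[OF assms(1)] assms(2)
      isolated_block_converse[OF assms(3)] _ assms(5,6)]
  have "y \<in> K - {b, a} \<or> le y a" .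
  with \<open>{b, a} = {a, b}\<close> show ?thesis by simp
qed

lemma lower_covers_isolated_block_interior:
  assumes po: "is_poset L le" and fin: "finite L" and bl: "isolated_block L le K a b"
    and x: "x \<in> K - {a, b}"
  shows "lower_covers L le x = lower_covers K le x"
proof
  have KL: "K \<subseteq> L" and xL: "x \<in> L" using bl x unfolding isolated_block_def by auto
  show "lower_covers L le x \<subseteq> lower_covers K le x"
    using bl x upper_covers_subset[OF _ KL]
    unfolding lower_covers_def isolated_block_def upper_covers_def
    by blast
  show "lower_covers K le x \<subseteq> lower_covers L le x"
  proof
    fix y assume "y \<in> lower_covers K le x"
    then have c: "upper_covers K le x y" unfolding lower_covers_def by blast
    then have yL: "y \<in> L" "le y x" "y \<noteq> x" using KL unfolding upper_covers_def by auto
    have "\<not> (\<exists>z\<in>L. le y z \<and> z \<noteq> y \<and> le z x \<and> z \<noteq> x)"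
    proof
      assume "\<exists>z\<in>L. le y z \<and> z \<noteq> y \<and> le z x \<and> z \<noteq> x"
      then obtain z where z: "z \<in> L" "le y z" "z \<noteq> y" "le z x" "z \<noteq> x" by blast
      obtain w where w: "w \<in> L" "upper_covers L le x w" "le z w"
        using exists_lower_cover_above[OF po fin xL z(1) z(4,5)] by blast
      have "w \<in> K" using w bl x unfolding isolated_block_def by blast
      moreover have "le y w" "w \<noteq> y"
        using poset_laws[OF po] z w yL xL unfolding upper_covers_def by blast+
      ultimately show False using c w(2) unfolding upper_covers_def by blast
    qed
    then show "y \<in> lower_covers L le x"
      using yL xL unfolding lower_covers_def upper_covers_def by blast
  qed
qed

lemma join_irreducible_isolated_block_interior:
  assumes "is_poset L le" "finite L" "isolated_block L le K a b" "x \<in> K - {a, b}"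
  shows "join_irreducible L le x \<longleftrightarrow> join_irreducible K le x"
  using lower_covers_isolated_block_interior[OF assms] assms(3,4)
  unfolding join_irreducible_iff_card_lower_covers isolated_block_def by auto

text \<open>Above an interior element the block contributes its own up-set and the rest of \<open>L\<close>
  contributes \<open>\<up>b\<close>; the two overlap exactly in \<open>b\<close>.\<close>

lemma card_up_set_isolated_block_interior:
  assumes po: "is_poset L le" and fin: "finite L" and bl: "isolated_block L le K a b"
    and x: "x \<in> K - {a, b}"
  shows "card (up_set L le x) + 1 = card (up_set K le x) + card (up_set L le b)"
proof -
  have KL: "K \<subseteq> L" and bK: "b \<in> K" and xK: "x \<in> K" and xb: "le x b"
    using bl x unfolding isolated_block_def by auto
  have "up_set L le x = up_set K le x \<union> up_set L le b"
    using isolated_block_up_closure[OF po fin bl x] poset_trans[OF po] KL xK bK xb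
    unfolding up_set_def by blast
  moreover have "up_set K le x \<inter> up_set L le b = {b}"
    using poset_laws[OF po] bl KL bK xK xb unfolding up_set_def isolated_block_def by blast
  moreover have "finite (up_set K le x)" "finite (up_set L le b)"
    using fin KL finite_subset unfolding up_set_def by fastforce+
  ultimately show ?thesis using card_Un_Int by fastforce
qed

lemma is_lattice_diff_isolated_interior:
  assumes lat: "is_lattice L le" and fin: "finite L" and bl: "isolated_block L le K a b"
  shows "is_lattice (L - (K - {a, b})) le"
proof (rule sublattice_if_closed[OF lat])
  have po: "is_poset L le" using lat by (rule lattice_poset)
  have ab: "a \<in> L" "b \<in> L" "a \<noteq> b" "le a b" using bl unfolding isolated_block_def by auto
  show "L - (K - {a, b}) \<subseteq> L" "L - (K - {a, b}) \<noteq> {}" using ab by auto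
  fix x y s assume x: "x \<in> L - (K - {a, b})" and y: "y \<in> L - (K - {a, b})"
  show "s \<in> L - (K - {a, b})" if s: "is_lub L le x y s"
  proof (rule ccontr)
    assume "s \<notin> L - (K - {a, b})"
    then have sI: "s \<in> K - {a, b}" using s unfolding is_lub_def by blast
    have "le x a" "le y a"
      using isolated_block_down_closure[OF po fin bl sI] x y s unfolding is_lub_def by blast+
    then have "le s a" using s ab unfolding is_lub_def by blast
    moreover have "le a s" using bl sI unfolding isolated_block_def by blast
    ultimately show False using poset_antisym[OF po] sI ab s unfolding is_lub_def by blast
  qed
  show "s \<in> L - (K - {a, b})" if s: "is_glb L le x y s"
  proof (rule ccontr)
    assume "s \<notin> L - (K - {a, b})"
    then have sI: "s \<in> K - {a, b}" using s unfolding is_glb_def by blast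
    have "le b x" "le b y"
      using isolated_block_up_closure[OF po fin bl sI] x y s unfolding is_glb_def by blast+
    then have "le b s" using s ab unfolding is_glb_def by blast
    moreover have "le s b" using bl sI unfolding isolated_block_def by blast
    ultimately show False using poset_antisym[OF po] sI ab s unfolding is_glb_def by blast
  qed
qed

lemma lower_covers_diff_isolated_interior:
  assumes po: "is_poset L le" and fin: "finite L" and bl: "isolated_block L le K a b"
    and j: "j \<in> L - (K - {a, b})" and jb: "j \<noteq> b"
  shows "lower_covers (L - (K - {a, b})) le j = lower_covers L le j"
proof
  have ab: "a \<in> L" "b \<in> L" "le a b" "a \<noteq> b" using bl unfolding isolated_block_def by auto
  show "lower_covers L le j \<subseteq> lower_covers (L - (K - {a, b})) le j"
  proof
    fix y assume "y \<in> lower_covers L le j"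
    then have y: "y \<in> L" "upper_covers L le j y" unfolding lower_covers_def by auto
    have "y \<notin> K - {a, b}"
    proof
      assume yI: "y \<in> K - {a, b}"
      then have "j \<in> K" using bl y j unfolding isolated_block_def by blast
      then have "j = a" using j jb by blast
      then show False
        using y yI bl poset_antisym[OF po] ab unfolding upper_covers_def isolated_block_def by blast
    qed
    then show "y \<in> lower_covers (L - (K - {a, b})) le j"
      using upper_covers_subset[OF y(2), of "L - (K - {a, b})"] y j unfolding lower_covers_def
      by blast
  qed
  show "lower_covers (L - (K - {a, b})) le j \<subseteq> lower_covers L le j"
  proof
    fix y assume "y \<in> lower_covers (L - (K - {a, b})) le j"
    then have y: "y \<in> L - (K - {a, b})" "upper_covers (L - (K - {a, b})) le j y"
      unfolding lower_covers_def by auto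
    have "\<not> (\<exists>z\<in>L. le y z \<and> z \<noteq> y \<and> le z j \<and> z \<noteq> j)"
    proof
      assume "\<exists>z\<in>L. le y z \<and> z \<noteq> y \<and> le z j \<and> z \<noteq> j"
      then obtain z where z: "z \<in> L" "le y z" "z \<noteq> y" "le z j" "z \<noteq> j" by blast
      then have zI: "z \<in> K - {a, b}" using y(2) unfolding upper_covers_def by blast
      have "le b j" using isolated_block_up_closure[OF po fin bl zI] j z by blast
      moreover have "le y a" using isolated_block_down_closure[OF po fin bl zI] y z by blast
      moreover have "le y b"
        using poset_trans[OF po _ ab(1,2) _ ab(3)] y(1) \<open>le y a\<close> by blast
      moreover have "y \<noteq> b"
        using poset_antisym[OF po ab(1,2) ab(3)] ab(4) \<open>le y a\<close> by blast
      ultimately show False using y(2) jb ab(2) unfolding upper_covers_def by blast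
    qed
    then show "y \<in> lower_covers L le j"
      using y unfolding lower_covers_def upper_covers_def by blast
  qed
qed

lemma card_diff_isolated_interior:
  assumes fin: "finite L" and bl: "isolated_block L le K a b"
  shows "card (L - (K - {a, b})) + card K = card L + 2"
proof -
  have ab: "{a, b} \<subseteq> K" "a \<noteq> b" and KL: "K \<subseteq> L" using bl unfolding isolated_block_def by auto
  have finK: "finite K" using finite_subset[OF KL fin] .
  have "card (K - {a, b}) + 2 = card K"
    using card_mono[OF finK ab(1)] card_Diff_subset[OF _ ab(1)] ab(2) by simp
  moreover have IL: "K - {a, b} \<subseteq> L" using KL by blast
  then have "card (L - (K - {a, b})) + card (K - {a, b}) = card L"
    using card_Diff_subset[OF finite_subset[OF IL fin] IL] card_mono[OF fin IL] by simp
  ultimately show ?thesis by simp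
qed

lemma up_set_top_diff_isolated_interior:
  assumes po: "is_poset L le" and bl: "isolated_block L le K a b"
  shows "up_set L le b \<subseteq> L - (K - {a, b})"
proof
  fix y assume "y \<in> up_set L le b"
  moreover have "y = b" if "y \<in> K" "le b y"
    using that poset_antisym[OF po] bl unfolding isolated_block_def by blast
  ultimately show "y \<in> L - (K - {a, b})" unfolding up_set_def by blast
qed

text \<open>A join-irreducible \<open>j\<close> of \<open>L - (K - {a, b})\<close> with a small up-set bounds \<open>\<up>b\<close>: either
  \<open>\<up>b\<close> lies inside \<open>\<up>j\<close> (together with \<open>a\<close>, if \<open>j \<le> a\<close>), or \<open>j\<close> would violate the counterexample
  property of \<open>L\<close> itself.\<close>

lemma card_up_set_top_isolated_block:
  assumes ce: "counterexample L le" and bl: "isolated_block L le K a b"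
    and j: "join_irreducible (L - (K - {a, b})) le j"
    and js: "2 * card (up_set (L - (K - {a, b})) le j) \<le> card (L - (K - {a, b}))"
    and small: "card (L - (K - {a, b})) < card L"
  shows "2 * card (up_set L le b) \<le> card (L - (K - {a, b}))"
proof -
  let ?L1 = "L - (K - {a, b})"
  have fin: "finite L" and po: "is_poset L le"
    using ce lattice_poset unfolding counterexample_def by auto
  have ab: "a \<in> L" "b \<in> L" "le a b" "a \<noteq> b" using bl unfolding isolated_block_def by auto
  have jL1: "j \<in> ?L1" using j unfolding join_irreducible_def by blast
  have upb: "up_set L le b \<subseteq> ?L1" using up_set_top_diff_isolated_interior[OF po bl] .
  show ?thesis
  proof (cases "j = b")
    case True
    then have "up_set ?L1 le j = up_set L le b" using upb unfolding up_set_def by blast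
    then show ?thesis using js by simp
  next
    case False
    show ?thesis
    proof (cases "le j a")
      case True
      have "le j b" using poset_trans[OF po _ ab(1,2) True ab(3)] jL1 by blast
      then have "le j y" if "y \<in> up_set L le b" for y
        using that poset_trans[OF po _ ab(2)] jL1 unfolding up_set_def by blast
      then have "insert a (up_set L le b) \<subseteq> up_set ?L1 le j"
        using upb ab(1,4) True bl unfolding up_set_def isolated_block_def by blast
      moreover have "a \<notin> up_set L le b" using poset_antisym[OF po] ab unfolding up_set_def by blast
      moreover have "finite (up_set L le b)" "finite (up_set ?L1 le j)"
        using fin unfolding up_set_def by simp_all
      ultimately have "card (up_set L le b) + 1 \<le> card (up_set ?L1 le j)"
        by (metis Suc_eq_plus1 card_insert_disjoint card_mono)
      then show ?thesis using js by simp
    next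
      case False
      have "join_irreducible L le j"
        using j lower_covers_diff_isolated_interior[OF po fin bl jL1 \<open>j \<noteq> b\<close>] jL1
        unfolding join_irreducible_iff_card_lower_covers by simp
      moreover have "up_set ?L1 le j = up_set L le j"
        using isolated_block_down_closure[OF po fin bl] False jL1 unfolding up_set_def by blast
      ultimately show ?thesis using ce js small unfolding counterexample_def by fastforce
    qed
  qed
qed

lemma min_counterexample_isolated_block_top:
  assumes min: "min_counterexample L le" and bl: "isolated_block L le K a b"
    and interior: "K - {a, b} \<noteq> {}"
  shows "2 * card (up_set L le b) + card K \<le> card L + 2"
proof -
  let ?L1 = "L - (K - {a, b})"
  have ce: "counterexample L le" and fin: "finite L" and lat: "is_lattice L le"
    using min unfolding min_counterexample_def counterexample_def by auto
  have ab: "a \<in> ?L1" "b \<in> ?L1" "a \<noteq> b" and KL: "K \<subseteq> L"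
    using bl unfolding isolated_block_def by auto
  have card: "card ?L1 + card K = card L + 2" using card_diff_isolated_interior[OF fin bl] .
  have "?L1 \<subset> L" using interior KL by blast
  then have "card ?L1 < card L" by (rule psubset_card_mono[OF fin])
  moreover have "1 < card ?L1" using card_mono[of ?L1 "{a, b}"] fin ab by auto
  ultimately obtain j where "join_irreducible ?L1 le j" "2 * card (up_set ?L1 le j) \<le> card ?L1"
    using min_counterexample_smaller_lattice[OF min _
        is_lattice_diff_isolated_interior[OF lat fin bl]]
      fin by auto
  then show ?thesis
    using card_up_set_top_isolated_block[OF ce bl] \<open>card ?L1 < card L\<close> card by fastforce
qed

lemma min_counterexample_isolated_block_interior:
  assumes min: "min_counterexample L le" and bl: "isolated_block L le K a b"
    and x: "x \<in> K - {a, b}" and ji: "join_irreducible K le x"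
  shows "card K < 2 * card (up_set K le x)"
proof -
  have fin: "finite L" and po: "is_poset L le"
    and ce: "\<And>j. join_irreducible L le j \<Longrightarrow> card L < 2 * card (up_set L le j)"
    using min lattice_poset unfolding min_counterexample_def counterexample_def by auto
  have "card L < 2 * card (up_set L le x)"
    using ce join_irreducible_isolated_block_interior[OF po fin bl x] ji by blast
  then show ?thesis
    using card_up_set_isolated_block_interior[OF po fin bl x]
      min_counterexample_isolated_block_top[OF min bl] x by fastforce
qed

section \<open>Principal ideals and join-irreducible tops\<close>

lemma lower_covers_down_closed:
  assumes "D \<subseteq> K" "\<forall>u\<in>D. \<forall>z\<in>K. le z u \<longrightarrow> z \<in> D" "y \<in> D"
  shows "lower_covers D le y = lower_covers K le y"
  using assms unfolding lower_covers_def upper_covers_def by blast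

lemma join_irreducible_down_closed:
  assumes "D \<subseteq> K" "\<forall>u\<in>D. \<forall>z\<in>K. le z u \<longrightarrow> z \<in> D" "y \<in> D"
  shows "join_irreducible D le y \<longleftrightarrow> join_irreducible K le y"
  using lower_covers_down_closed[OF assms] assms(1,3)
  unfolding join_irreducible_iff_card_lower_covers by auto

lemma down_set_down_closed:
  assumes "is_poset K le" "c \<in> K"
  shows "\<forall>u\<in>down_set K le c. \<forall>z\<in>K. le z u \<longrightarrow> z \<in> down_set K le c"
  using poset_trans[OF assms(1) _ _ assms(2)] unfolding down_set_def by blast

lemma is_lattice_down_set:
  assumes lat: "is_lattice K le" and c: "c \<in> K"
  shows "is_lattice (down_set K le c) le"
proof (rule sublattice_if_closed[OF lat])
  have po: "is_poset K le" using lat by (rule lattice_poset)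
  show "down_set K le c \<subseteq> K" "down_set K le c \<noteq> {}"
    using c poset_refl[OF po c] unfolding down_set_def by auto
  fix x y s assume x: "x \<in> down_set K le c" and y: "y \<in> down_set K le c"
  show "s \<in> down_set K le c" if "is_lub K le x y s"
    using that x y c unfolding down_set_def is_lub_def by blast
  show "s \<in> down_set K le c" if "is_glb K le x y s"
    using that x down_set_down_closed[OF po c] unfolding is_glb_def by blast
qed

lemma top_el_down_set:
  assumes po: "is_poset K le" and c: "c \<in> K"
  shows "top_el (down_set K le c) le = c"
proof (rule top_el_eqI)
  show "is_poset (down_set K le c) le" using is_poset_subset[OF po down_set_subset] .
  show "c \<in> down_set K le c" using c poset_refl[OF po c] unfolding down_set_def by blast
qed (simp add: down_set_def)

lemma card_up_set_insert_top:
  assumes "finite D" "t \<notin> D" "y \<in> D" "le y t"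
  shows "card (up_set (insert t D) le y) = card (up_set D le y) + 1"
proof -
  have "up_set (insert t D) le y = insert t (up_set D le y)"
    using assms unfolding up_set_def by auto
  moreover have "t \<notin> up_set D le y" "finite (up_set D le y)"
    using assms unfolding up_set_def by auto
  ultimately show ?thesis by simp
qed

lemma join_irreducible_down_set:
  assumes "is_poset K le" "c \<in> K" "z \<in> down_set K le c"
  shows "join_irreducible (down_set K le c) le z \<longleftrightarrow> join_irreducible K le z"
  using join_irreducible_down_closed[OF down_set_subset down_set_down_closed[OF assms(1,2)]
      assms(3)] .

lemma join_irreducible_top_lower_cover:
  assumes fin: "finite K" and lat: "is_lattice K le" and ji: "join_irreducible K le (top_el K le)"
  obtains c where "upper_covers K le (top_el K le) c" "lower_covers K le (top_el K le) = {c}"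
    "K = insert (top_el K le) (down_set K le c)" "top_el K le \<notin> down_set K le c"
    "card K = card (down_set K le c) + 1" "card (up_set K le c) = 2"
proof -
  let ?t = "top_el K le"
  have po: "is_poset K le" using lat by (rule lattice_poset)
  have t: "?t \<in> K" "\<And>y. y \<in> K \<Longrightarrow> le y ?t" using lattice_top[OF fin lat] by auto
  obtain c where c: "lower_covers K le ?t = {c}"
    using ji card_1_singletonE unfolding join_irreducible_iff_card_lower_covers by blast
  then have ct: "upper_covers K le ?t c" unfolding lower_covers_def by blast
  then have cK: "c \<in> K" "le c ?t" "c \<noteq> ?t" unfolding upper_covers_def by auto
  have "le y c" if y: "y \<in> K" "y \<noteq> ?t" for y
  proof -
    obtain w where "upper_covers K le ?t w" "le y w"
      using exists_lower_cover_above[OF po fin t(1) y(1) t(2)[OF y(1)] y(2)] by blast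
    moreover from this have "w = c" using c unfolding lower_covers_def upper_covers_def by blast
    ultimately show ?thesis by simp
  qed
  then have decomp: "K = insert ?t (down_set K le c)"
    using t(1) unfolding down_set_def by blast
  have notin: "?t \<notin> down_set K le c"
    using poset_antisym[OF po cK(1) t(1) cK(2)] cK(3) unfolding down_set_def by blast
  have "card K = card (down_set K le c) + 1"
    using decomp notin finite_subset[OF down_set_subset fin]
    by (metis card_insert_disjoint Suc_eq_plus1)
  moreover have "card (up_set K le c) = 2"
    using up_set_lower_cover_of_top[OF po ct t(2)] cK(3) by simp
  ultimately show thesis using that[OF ct c decomp notin] by blast
qed

lemma isolated_block_down_set:
  assumes po: "is_poset L le" and bl: "isolated_block L le K a b"
    and cover: "lower_covers K le b = {c}" and ca: "c \<noteq> a"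
    and decomp: "K = insert b (down_set K le c)"
  shows "isolated_block L le (down_set K le c) a c"
proof -
  have KL: "K \<subseteq> L" and ab: "a \<in> K" "b \<in> K" and bounds: "\<forall>y\<in>K. le a y \<and> le y b"
    using bl unfolding isolated_block_def by auto
  have c: "c \<in> K" "le c b" "c \<noteq> b"
    using cover unfolding lower_covers_def upper_covers_def by auto
  have nbc: "\<not> le b c" using poset_antisym[OF po] KL ab c by blast
  have "\<not> upper_covers L le x y \<and> \<not> upper_covers L le y x"
    if x: "x \<in> down_set K le c - {a, c}" and y: "y \<in> L - down_set K le c" for x y
  proof (cases "y \<in> K")
    case False
    moreover have "x \<noteq> b" using x nbc unfolding down_set_def by blast
    ultimately show ?thesis using bl x y unfolding isolated_block_def down_set_def by blast
  next
    case True
    then have "y = b" using y decomp by blast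
    moreover have "\<not> le b x"
      using x nbc poset_trans[OF po] KL ab c unfolding down_set_def by blast
    moreover have "\<not> upper_covers K le b x"
      using x cover unfolding lower_covers_def down_set_def by blast
    ultimately show ?thesis
      using upper_covers_subset[OF _ KL] ab x unfolding upper_covers_def down_set_def by blast
  qed
  then show ?thesis
    using KL ab bounds c ca poset_refl[OF po] unfolding isolated_block_def down_set_def by auto
qed

section \<open>Lattices with at most seven elements\<close>

lemma lower_covers_antichain:
  "u \<in> lower_covers K le c \<Longrightarrow> v \<in> lower_covers K le c \<Longrightarrow> le u v \<Longrightarrow> u = v"
  unfolding lower_covers_def upper_covers_def by blast

lemma join_lower_covers_le:
  assumes lat: "is_lattice K le" and u: "u \<in> lower_covers K le c" and v: "v \<in> lower_covers K le c"
    and "u \<noteq> v" "d \<in> K" "le u d" "le v d"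
  shows "le c d"
proof -
  have uv: "u \<in> K" "v \<in> K" "c \<in> K" "le u c" "le v c"
    using u v unfolding lower_covers_def upper_covers_def by auto
  obtain s where s: "is_lub K le u v s" using lat uv unfolding is_lattice_def by blast
  have "s \<noteq> u" using s lower_covers_antichain[OF v u] \<open>u \<noteq> v\<close> unfolding is_lub_def by blast
  moreover have "le s c" "le u s" "s \<in> K" using s uv unfolding is_lub_def by auto
  ultimately have "s = c" using u unfolding lower_covers_def upper_covers_def by blast
  then show ?thesis using s assms(5-7) unfolding is_lub_def by blast
qed

lemma bottom_notin_lower_covers:
  assumes "\<forall>x\<in>K. le b x" and "2 \<le> card (lower_covers K le c)"
  shows "b \<notin> lower_covers K le c"
proof
  assume b: "b \<in> lower_covers K le c"
  have "lower_covers K le c \<subseteq> {b}"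
    using lower_covers_antichain[OF b] assms(1) unfolding lower_covers_def by blast
  then show False using assms(2) subset_singletonD by fastforce
qed

lemma two_le_card_lower_covers:
  assumes po: "is_poset K le" and fin: "finite K" and "c \<in> K" "b \<in> K" "le b c" "b \<noteq> c"
    and "\<not> join_irreducible K le c"
  shows "2 \<le> card (lower_covers K le c)"
proof -
  have "lower_covers K le c \<noteq> {}"
    using exists_lower_cover_above[OF po fin assms(3-6)] unfolding lower_covers_def by blast
  moreover have "finite (lower_covers K le c)" using fin unfolding lower_covers_def by simp
  ultimately have "card (lower_covers K le c) \<noteq> 0" by simp
  moreover have "card (lower_covers K le c) \<noteq> 1"
    using assms(3,7) unfolding join_irreducible_iff_card_lower_covers by blast
  ultimately show ?thesis by linarith
qed

lemma up_set_join_irreducible_coatom: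
  assumes fin: "finite K" and lat: "is_lattice K le"
    and c: "c \<in> lower_covers K le (top_el K le)"
    and two: "2 \<le> card (lower_covers K le (top_el K le))"
  shows "2 * card (up_set K le c) \<le> card K"
proof -
  let ?t = "top_el K le" and ?b = "bottom K le" and ?C = "lower_covers K le (top_el K le)"
  have po: "is_poset K le" using lat by (rule lattice_poset)
  have t: "?t \<in> K" "\<And>x. x \<in> K \<Longrightarrow> le x ?t"
    and b: "?b \<in> K" "\<And>x. x \<in> K \<Longrightarrow> le ?b x" "\<forall>x\<in>K. le ?b x"
    using lattice_top[OF fin lat] lattice_bottom[OF fin lat] by auto
  have ct: "upper_covers K le ?t c" using c unfolding lower_covers_def by blast
  then have "card (up_set K le c) = 2"
    using up_set_lower_cover_of_top[OF po ct t(2)] unfolding upper_covers_def by simp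
  moreover have "?b \<notin> ?C" using bottom_notin_lower_covers[of K le ?b, OF b(3) two] .
  moreover have "?t \<notin> ?C" unfolding lower_covers_def upper_covers_def by blast
  moreover have "?b \<noteq> ?t"
    using ct b(2) poset_antisym[OF po] unfolding upper_covers_def by metis
  moreover have "finite ?C" using fin unfolding lower_covers_def by simp
  ultimately have "2 * card (up_set K le c) \<le> card ({?b, ?t} \<union> ?C)"
    using two card_Un_disjoint[of "{?b, ?t}" ?C] by simp
  also have "\<dots> \<le> card K"
    using fin b(1) t(1) by (intro card_mono) (auto simp: lower_covers_def)
  finally show ?thesis .
qed

lemma private_lower_cover_join_irreducible:
  assumes fin: "finite K" and lat: "is_lattice K le"
    and c1: "c1 \<in> lower_covers K le (top_el K le)" and c2: "c2 \<in> lower_covers K le (top_el K le)"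
    and "c1 \<noteq> c2"
    and K: "K = {bottom K le, top_el K le, c1, c2} \<union> lower_covers K le c1 \<union> lower_covers K le c2"
    and u: "u \<in> lower_covers K le c1" "u \<in> lower_covers K le c2"
    and v: "v \<in> lower_covers K le c1" "v \<notin> lower_covers K le c2" "v \<noteq> bottom K le"
  shows "join_irreducible K le v" "up_set K le v \<subseteq> {v, c1, top_el K le}"
proof -
  let ?t = "top_el K le" and ?b = "bottom K le"
  have po: "is_poset K le" using lat by (rule lattice_poset)
  have t: "?t \<in> K" "\<And>x. x \<in> K \<Longrightarrow> le x ?t" and b: "?b \<in> K" "\<And>x. x \<in> K \<Longrightarrow> le ?b x"
    using lattice_top[OF fin lat] lattice_bottom[OF fin lat] by auto
  have cK: "c1 \<in> K" "c2 \<in> K" "c1 \<noteq> ?t"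
    using c1 c2 unfolding lower_covers_def upper_covers_def by auto
  have incomparable: "\<not> le c1 c2" "\<not> le c2 c1"
    using lower_covers_antichain[OF c1 c2] lower_covers_antichain[OF c2 c1] \<open>c1 \<noteq> c2\<close> by auto
  have vK: "v \<in> K" "le v c1" "v \<noteq> c1" using v unfolding lower_covers_def upper_covers_def by auto
  have below: "x \<in> K" "le x c" if "x \<in> lower_covers K le c" for x c
    using that unfolding lower_covers_def upper_covers_def by auto
  have v_c2: "\<not> le v c2"
    using join_lower_covers_le[OF lat u(1) v(1) _ cK(2)] below[OF u(2)] u(2) v(2) incomparable
    by blast
  have w_c1: "\<not> le w c1" if "w \<in> lower_covers K le c2" "w \<notin> lower_covers K le c1" for w
    using join_lower_covers_le[OF lat u(2) that(1) _ cK(1)] below[OF u(1)] u(1) that(2) incomparable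
    by blast
  have "y \<in> {v, c1, ?t}" if y: "y \<in> K" "le v y" for y
  proof -
    have "y \<noteq> ?b" using v(3) poset_antisym[OF po vK(1) b(1)] b(2)[OF vK(1)] y(2) by blast
    moreover have "y \<noteq> c2" using v_c2 y(2) by blast
    moreover have "y = v" if "y \<in> lower_covers K le c1"
      using lower_covers_antichain[OF v(1) that y(2)] by simp
    moreover have "y \<notin> lower_covers K le c2 - lower_covers K le c1"
      using v_c2 y poset_trans[OF po vK(1) y(1) cK(2)] below by blast
    ultimately show ?thesis using y(1) K by blast
  qed
  then show "up_set K le v \<subseteq> {v, c1, ?t}" unfolding up_set_def by blast
  have "y = ?b" if y: "y \<in> K" "le y v" "y \<noteq> v" for y
  proof -
    have yc1: "le y c1" using poset_trans[OF po y(1) vK(1) cK(1) y(2) vK(2)] .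
    have "y \<noteq> ?t" using yc1 cK poset_antisym[OF po] t by blast
    moreover have "y \<noteq> c1" using y vK poset_antisym[OF po] cK(1) by blast
    moreover have "y \<noteq> c2" using yc1 incomparable by blast
    moreover have "y \<notin> lower_covers K le c1" using lower_covers_antichain[OF _ v(1) y(2)] y(3)
      by blast
    moreover have "y \<notin> lower_covers K le c2 - lower_covers K le c1" using w_c1 yc1 by blast
    ultimately show ?thesis using y(1) K by blast
  qed
  then have "lower_covers K le v = {?b}"
    using b vK(1) v(3) unfolding lower_covers_def upper_covers_def by blast
  then show "join_irreducible K le v"
    using vK(1) unfolding join_irreducible_iff_card_lower_covers by simp
qed

lemma coatoms_common_lower_covers:
  assumes lat: "is_lattice K le"
    and c1: "c1 \<in> lower_covers K le t" and c2: "c2 \<in> lower_covers K le t" and "c1 \<noteq> c2"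
  shows "card (lower_covers K le c1 \<inter> lower_covers K le c2) \<le> 1"
proof (rule ccontr)
  assume "\<not> ?thesis"
  then obtain T where "T \<subseteq> lower_covers K le c1 \<inter> lower_covers K le c2" "card T = 2"
    using obtain_subset_with_card_n[of 2] by (metis not_le Suc_leI one_add_one plus_1_eq_Suc)
  then obtain u v where uv: "u \<in> lower_covers K le c1 \<inter> lower_covers K le c2"
    "v \<in> lower_covers K le c1 \<inter> lower_covers K le c2" "u \<noteq> v"
    by (auto simp: card_2_iff)
  have "c2 \<in> K" using c2 unfolding lower_covers_def upper_covers_def by blast
  then have "le c1 c2"
    using join_lower_covers_le[OF lat _ _ uv(3)] uv(1,2) unfolding lower_covers_def upper_covers_def
    by blast
  then show False using lower_covers_antichain[OF c1 c2] \<open>c1 \<noteq> c2\<close> by blast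
qed

text \<open>If the top of a lattice with at most seven elements has two join-reducible lower covers
  \<open>c\<^sub>1, c\<^sub>2\<close>, counting forces \<open>K = {0, 1, c\<^sub>1, c\<^sub>2} \<union> A\<^sub>1 \<union> A\<^sub>2\<close> with \<open>|A\<^sub>1 \<inter> A\<^sub>2| = 1\<close>.\<close>

lemma small_lattice_nonji_coatoms:
  assumes fin: "finite K" and lat: "is_lattice K le" and seven: "card K \<le> 7"
    and c1: "c1 \<in> lower_covers K le (top_el K le)" and c2: "c2 \<in> lower_covers K le (top_el K le)"
    and "c1 \<noteq> c2" and "\<not> join_irreducible K le c1" "\<not> join_irreducible K le c2"
  shows "\<exists>v\<in>K - {bottom K le, top_el K le}. join_irreducible K le v \<and>
           2 * card (up_set K le v) \<le> card K"
proof -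
  let ?t = "top_el K le" and ?b = "bottom K le"
  let ?A1 = "lower_covers K le c1" and ?A2 = "lower_covers K le c2"
  have po: "is_poset K le" using lat by (rule lattice_poset)
  have t: "?t \<in> K" "\<And>x. x \<in> K \<Longrightarrow> le x ?t"
    and b: "?b \<in> K" "\<And>x. x \<in> K \<Longrightarrow> le ?b x" "\<forall>x\<in>K. le ?b x"
    using lattice_top[OF fin lat] lattice_bottom[OF fin lat] by auto
  have lc_fin: "finite (lower_covers K le x)" for x
    using fin unfolding lower_covers_def by simp
  have lc_sub: "lower_covers K le x \<subseteq> K" "x \<notin> lower_covers K le x" for x
    unfolding lower_covers_def upper_covers_def by auto
  have cK: "c1 \<in> K" "c2 \<in> K" using c1 c2 lc_sub by auto
  have "2 \<le> card (lower_covers K le ?t)"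
    using card_mono[OF lc_fin[of ?t], of "{c1, c2}"] c1 c2 \<open>c1 \<noteq> c2\<close> by simp
  then have cb: "c1 \<noteq> ?b" "c2 \<noteq> ?b" using bottom_notin_lower_covers[of K le ?b, OF b(3)] c1 c2
    by metis+
  have A1: "2 \<le> card ?A1" "?b \<notin> ?A1" and A2: "2 \<le> card ?A2" "?b \<notin> ?A2"
    using two_le_card_lower_covers[OF po fin] bottom_notin_lower_covers[of K le ?b, OF b(3)]
      cK b cb assms(7,8) by metis+
  have tA: "?t \<notin> ?A1" "?t \<notin> ?A2" "c1 \<notin> ?A2" "c2 \<notin> ?A1"
    using lower_covers_antichain[OF c1 c2] lower_covers_antichain[OF c2 c1] \<open>c1 \<noteq> c2\<close> c1 c2 t(2)
      poset_antisym[OF po] cK t(1) unfolding lower_covers_def upper_covers_def by blast+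
  have "?t \<noteq> c1" "?t \<noteq> c2" using c1 c2 lc_sub(2) by metis+
  moreover have "?b \<noteq> ?t" using poset_antisym[OF po cK(1) b(1)] t(2) b(2) cK(1) cb(1) by metis
  ultimately have card4: "card {?b, ?t, c1, c2} = 4" using cb \<open>c1 \<noteq> c2\<close> by simp
  define S where "S = {?b, ?t, c1, c2} \<union> (?A1 \<union> ?A2)"
  have "card S = 4 + card (?A1 \<union> ?A2)"
    unfolding S_def using card4 A1(2) A2(2) tA lc_sub(2) lc_fin
    by (subst card_Un_disjoint) auto
  moreover have "card (?A1 \<union> ?A2) + card (?A1 \<inter> ?A2) = card ?A1 + card ?A2"
    using card_Un_Int[OF lc_fin lc_fin] by simp
  moreover have "card (?A1 \<inter> ?A2) \<le> 1"
    using coatoms_common_lower_covers[OF lat c1 c2 \<open>c1 \<noteq> c2\<close>] .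
  moreover have SK: "S \<subseteq> K" unfolding S_def using b(1) t(1) cK lc_sub by blast
  ultimately have "card S = card K" "card K = 7" "card (?A1 \<inter> ?A2) = 1"
    using card_mono[OF fin SK] seven A1(1) A2(1) by linarith+
  then have "K = S" "?A1 \<inter> ?A2 \<noteq> {}" "\<not> ?A1 \<subseteq> ?A2"
    using card_subset_eq[OF fin SK] A1(1) card_mono[OF lc_fin[of c2], of ?A1]
    by (auto simp: Int_absorb2)
  then obtain u v where "u \<in> ?A1" "u \<in> ?A2" "v \<in> ?A1" "v \<notin> ?A2" by blast
  then have "join_irreducible K le v" "up_set K le v \<subseteq> {v, c1, ?t}"
    using private_lower_cover_join_irreducible[OF fin lat c1 c2 \<open>c1 \<noteq> c2\<close>] \<open>K = S\<close> A1(2)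
    unfolding S_def by (metis Un_assoc)+
  moreover have "card {v, c1, ?t} \<le> 3" by (simp add: card_insert_if)
  moreover have "v \<in> K - {?b, ?t}" using \<open>v \<in> ?A1\<close> A1(2) tA(1) lc_sub(1) by blast
  ultimately show ?thesis
    using \<open>card K = 7\<close> card_mono[of "{v, c1, ?t}" "up_set K le v"] by fastforce
qed

lemma small_lattice_interior_ji:
  assumes fin: "finite K" and lat: "is_lattice K le" and "2 \<le> card K" "card K \<le> 7"
    and nji: "\<not> join_irreducible K le (top_el K le)"
  shows "\<exists>x\<in>K - {bottom K le, top_el K le}. join_irreducible K le x \<and>
           2 * card (up_set K le x) \<le> card K"
proof -
  let ?t = "top_el K le" and ?b = "bottom K le" and ?C = "lower_covers K le (top_el K le)"
  have po: "is_poset K le" using lat by (rule lattice_poset)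
  have t: "?t \<in> K" "\<And>x. x \<in> K \<Longrightarrow> le x ?t"
    and b: "?b \<in> K" "\<And>x. x \<in> K \<Longrightarrow> le ?b x" "\<forall>x\<in>K. le ?b x"
    using lattice_top[OF fin lat] lattice_bottom[OF fin lat] by auto
  have two: "2 \<le> card ?C"
    using two_le_card_lower_covers[OF po fin t(1) b(1) b(2)[OF t(1)]] nji
      lattice_bottom_neq_top[OF fin lat] assms(3) by blast
  have C: "c \<in> K - {?b, ?t}" if "c \<in> ?C" for c
    using that bottom_notin_lower_covers[of K le ?b, OF b(3) two]
    unfolding lower_covers_def upper_covers_def by blast
  show ?thesis
  proof (cases "\<exists>c\<in>?C. join_irreducible K le c")
    case True
    then show ?thesis using C up_set_join_irreducible_coatom[OF fin lat _ two] by blast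
  next
    case False
    obtain T where "T \<subseteq> ?C" "card T = 2" using obtain_subset_with_card_n[OF two] by blast
    then obtain c1 c2 where "c1 \<in> ?C" "c2 \<in> ?C" "c1 \<noteq> c2" by (auto simp: card_2_iff)
    then show ?thesis using small_lattice_nonji_coatoms[OF fin lat assms(4)] False by blast
  qed
qed

lemma min_counterexample_isolated_block_nonji_top:
  assumes min: "min_counterexample L le" and bl: "isolated_block L le K a b"
    and lat: "is_lattice K le" and "card K \<le> 7" and nji: "\<not> join_irreducible K le b"
  shows False
proof -
  have po: "is_poset L le" and finK: "finite K"
    using min bl finite_subset lattice_poset
    unfolding min_counterexample_def counterexample_def isolated_block_def by auto
  have "2 \<le> card K"
    using bl card_mono[OF finK, of "{a, b}"] unfolding isolated_block_def by auto
  then obtain x where "x \<in> K - {a, b}" "join_irreducible K le x" "2 * card (up_set K le x) \<le> card K"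
    using small_lattice_interior_ji[OF finK lat _ \<open>card K \<le> 7\<close>] nji
      isolated_block_bottom_top[OF po bl]
    by auto
  then show False using min_counterexample_isolated_block_interior[OF min bl] by fastforce
qed

text \<open>If the top of the block is join-irreducible, the block shrinks to the principal ideal of
  its unique lower cover \<open>c\<close>, which is again an isolated block.\<close>

lemma min_counterexample_small_isolated_block:
  assumes min: "min_counterexample L le" and bl: "isolated_block L le K a b"
    and lat: "is_lattice K le" and "4 \<le> card K" "card K \<le> 7"
  shows False
proof (cases "join_irreducible K le b")
  case False
  then show False using min_counterexample_isolated_block_nonji_top[OF min bl lat] assms(5) by blast
next
  case True
  have po: "is_poset L le" and poK: "is_poset K le" and finK: "finite K"
    using min bl finite_subset lattice_poset[OF lat] lattice_poset
    unfolding min_counterexample_def counterexample_def isolated_block_def by auto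
  have ab: "bottom K le = a" "top_el K le = b" using isolated_block_bottom_top[OF po bl] .
  obtain c where cb: "upper_covers K le b c" and c: "lower_covers K le b = {c}"
    and decomp: "K = insert b (down_set K le c)"
    and cardD: "card K = card (down_set K le c) + 1" and up_c: "card (up_set K le c) = 2"
    using join_irreducible_top_lower_cover[OF finK lat] True ab by metis
  have cK: "c \<in> K" using cb unfolding upper_covers_def by blast
  have "c \<noteq> a"
  proof
    assume "c = a"
    then have "down_set K le c \<subseteq> {a}"
      using bl poset_antisym[OF poK] unfolding down_set_def isolated_block_def by blast
    then show False using cardD \<open>4 \<le> card K\<close> subset_singletonD by fastforce
  qed
  show False
  proof (cases "join_irreducible K le c")
    case True
    then show False
      using min_counterexample_isolated_block_interior[OF min bl _ True] \<open>c \<noteq> a\<close> cK cb up_c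
        \<open>4 \<le> card K\<close> unfolding upper_covers_def by fastforce
  next
    case False
    moreover have "c \<in> down_set K le c" using cK poset_refl[OF poK cK] unfolding down_set_def
      by blast
    ultimately show False
      using min_counterexample_isolated_block_nonji_top[OF min
          isolated_block_down_set[OF po bl c \<open>c \<noteq> a\<close> decomp] is_lattice_down_set[OF lat cK]]
        join_irreducible_down_set[OF poK cK] top_el_down_set[OF poK cK] cardD \<open>card K \<le> 7\<close> by simp
  qed
qed

lemma min_counterexample_interior_ji:
  assumes min: "min_counterexample L leL" and fin: "finite K" and lat: "is_lattice K le"
    and "2 < card K" "card K < card L"
  shows "\<exists>x\<in>K - {bottom K le, top_el K le}. join_irreducible K le x \<and>
           2 * card (up_set K le x) \<le> card K + 1"
proof -
  let ?t = "top_el K le" and ?b = "bottom K le"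
  have po: "is_poset K le" using lat by (rule lattice_poset)
  have t: "?t \<in> K" "\<And>x. x \<in> K \<Longrightarrow> le x ?t" and b: "?b \<in> K" "\<And>x. x \<in> K \<Longrightarrow> le ?b x"
    using lattice_top[OF fin lat] lattice_bottom[OF fin lat] by auto
  have b_nji: "\<not> join_irreducible K le ?b" using not_join_irreducible_bottom[OF po b] .
  obtain y where y: "join_irreducible K le y" "2 * card (up_set K le y) \<le> card K"
    using min_counterexample_smaller_lattice[OF min fin lat] assms(4,5) by auto
  show ?thesis
  proof (cases "y = ?t")
    case False
    then show ?thesis using y b_nji unfolding join_irreducible_def by fastforce
  next
    case True
    obtain c where ct: "upper_covers K le ?t c" and decomp: "K = insert ?t (down_set K le c)"
      and t_notin: "?t \<notin> down_set K le c"
      and cardD: "card K = card (down_set K le c) + 1" and up_c: "card (up_set K le c) = 2"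
      using join_irreducible_top_lower_cover[OF fin lat] True y(1) by metis
    have cK: "c \<in> K" using ct unfolding upper_covers_def by blast
    let ?D = "down_set K le c"
    have finD: "finite ?D" using finite_subset[OF down_set_subset fin] .
    show ?thesis
    proof (cases "join_irreducible K le c")
      case True
      then show ?thesis using b_nji ct cK up_c assms(4) unfolding upper_covers_def by fastforce
    next
      case False
      obtain z where z: "join_irreducible ?D le z" "2 * card (up_set ?D le z) \<le> card ?D"
        using min_counterexample_smaller_lattice[OF min finD is_lattice_down_set[OF lat cK]]
          cardD assms(4,5) by auto
      have zD: "z \<in> ?D" using z(1) unfolding join_irreducible_def by blast
      have "join_irreducible K le z" "z \<noteq> c" "z \<noteq> ?b" "z \<noteq> ?t" "z \<in> K"
        using join_irreducible_down_set[OF po cK zD] z(1) False b_nji t_notin zD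
          down_set_subset[of K le c] by auto
      moreover have "card (up_set K le z) = card (up_set ?D le z) + 1"
        using card_up_set_insert_top[OF finD t_notin zD, of le] t(2) \<open>z \<in> K\<close> decomp by simp
      ultimately show ?thesis using z cardD by auto
    qed
  qed
qed

lemma card_up_set_above_dual_atom:
  assumes fin: "finite L" and lat: "is_lattice L le"
    and d: "dual_atom L le d" and b: "b \<in> L" "le d b"
  shows "card (up_set L le b) \<le> 2"
proof -
  let ?T = "top_el L le"
  have po: "is_poset L le" using lat by (rule lattice_poset)
  have T: "?T \<in> L" "\<And>y. y \<in> L \<Longrightarrow> le y ?T" using lattice_top[OF fin lat] by auto
  have dT: "upper_covers L le ?T d" using d unfolding dual_atom_def .
  show ?thesis
  proof (cases "b = ?T")
    case True
    then have "up_set L le b \<subseteq> {?T}"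
      using poset_antisym[OF po] T unfolding up_set_def by blast
    then show ?thesis using subset_singletonD by fastforce
  next
    case False
    then have "b = d" using dT b T unfolding upper_covers_def by blast
    then show ?thesis using up_set_lower_cover_of_top[OF po dT T(2)] by (simp add: card_insert_if)
  qed
qed

lemma min_counterexample_isolated_block_dual_atom:
  assumes min: "min_counterexample L le" and bl: "isolated_block L le K a b"
    and lat: "is_lattice K le" and "2 < card K" "card K + 2 < card L"
    and d: "dual_atom L le d" "le d b"
  shows False
proof -
  have fin: "finite L" and latL: "is_lattice L le"
    and ce: "\<And>j. join_irreducible L le j \<Longrightarrow> card L < 2 * card (up_set L le j)"
    using min unfolding min_counterexample_def counterexample_def by auto
  have po: "is_poset L le" using latL by (rule lattice_poset)
  have finK: "finite K" "b \<in> L" using bl fin finite_subset unfolding isolated_block_def by auto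
  obtain x where x: "x \<in> K - {a, b}" "join_irreducible K le x"
    "2 * card (up_set K le x) \<le> card K + 1"
    using min_counterexample_interior_ji[OF min finK(1) lat] assms(4,5)
      isolated_block_bottom_top[OF po bl]
    by auto
  have "card L < 2 * card (up_set L le x)"
    using ce join_irreducible_isolated_block_interior[OF po fin bl x(1)] x(2) by blast
  then show False
    using card_up_set_isolated_block_interior[OF po fin bl x(1)] x(3) assms(5)
      card_up_set_above_dual_atom[OF fin latL d(1) finK(2) d(2)] by linarith
qed

lemma isolated_block_if_no_interior_cover:
  assumes "L' \<subseteq> L" and fin: "finite L'" and lat: "is_lattice L' le" and "2 \<le> card L'"
    and "\<not> (\<exists>x\<in>L' - {bottom L' le, top_el L' le}. \<exists>y\<in>L - L'.
             upper_covers L le x y \<or> upper_covers L le y x)"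
  shows "isolated_block L le L' (bottom L' le) (top_el L' le)"
  using assms lattice_bottom[OF fin lat] lattice_top[OF fin lat] lattice_bottom_neq_top[OF fin lat]
  unfolding isolated_block_def by blast

theorem theorem2p15:
  fixes L :: "'a set" and le :: "'a \<Rightarrow> 'a \<Rightarrow> bool" and L' :: "'a set"
  assumes "min_counterexample L le"
    and "L' \<subseteq> L"
    and "is_lattice L' le"
    and "(3 < card L' \<and> card L' < 8) \<or>
         (2 < card L' \<and> card L' + 2 < card L \<and>
          (\<exists>d. dual_atom L le d \<and> le d (top_el L' le)))"
  shows "\<exists>x \<in> L' - {bottom L' le, top_el L' le}. \<exists>y \<in> L - L'.
           upper_covers L le x y \<or> upper_covers L le y x"
proof (rule ccontr)
  assume no_cover: "\<not> ?thesis"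
  have "finite L'"
    using assms(1,2) finite_subset unfolding min_counterexample_def counterexample_def by blast
  then have block: "isolated_block L le L' (bottom L' le) (top_el L' le)"
    using isolated_block_if_no_interior_cover[OF assms(2) _ assms(3) _ no_cover] assms(4) by auto
  from assms(4) show False
  proof
    assume "3 < card L' \<and> card L' < 8"
    then show False using min_counterexample_small_isolated_block[OF assms(1) block assms(3)]
      by simp
  next
    assume "2 < card L' \<and> card L' + 2 < card L \<and> (\<exists>d. dual_atom L le d \<and> le d (top_el L' le))"
    then show False using min_counterexample_isolated_block_dual_atom[OF assms(1) block assms(3)]
      by blast
  qed
qed

end
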